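(* Let $U,V\subseteq M$ be open and let $\Psi:U\to V$ be a diffeomorphism with $\Psi^*t=t$. Then: (1) for every covariant tensor $\omega$ on $V$, $j_*\Psi^*\omega=j_*\Psi^*j_*\omega$; (2) for every $(n+1)$-form $\omega$ and spatial vector field $S$ on $V$, $j_*\Psi^*(S\lrcorner\omega)=0$; (3) if additionally $\Psi$ is the identity on $\Sigma_{t_0}\cap U$ for some $t_0$, and $B$ is a spatial tensor field on $V$, then $j_*\Psi^*B=B$ on $\Sigma_{t_0}\cap U$.
   Context: $M=\Sigma\times I$, where $\Sigma\subseteq\mathbb R^n$ is open with coordinates $x^1,\dots,x^n$ and $I\subseteq\mathbb R$ is an open interval with coordinate $t$; $\Sigma_t=\Sigma\times\{t\}$. A tensor is spatial if it vanishes whenever one of its arguments is $dt$ or $\partial_t$. The projection $j_*$ onto spatial tensors is defined by $j_*dt=0$, $j_*dx^i=dx^i$, $j_*\partial_t=0$, $j_*\partial_{x^i}=\partial_{x^i}$, extended by $j_*T(\cdot,\dots,\cdot)=T(j_*\cdot,\dots,j_*\cdot)$. The pullback $\Psi^*$ acts on vectors by $\Psi^*Y=(\Psi^{-1})_*Y$ and hence on arbitrary tensors. *)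

theory Defs
  imports "HOL-Analysis.Analysis"
begin

text \<open>Points and tangent vectors of M = Sigma x I, a subset of R^n x R.
  The first component carries the spatial coordinates x^1..x^n, the second one t.\<close>
type_synonym ('n) pt = "(real ^ ('n::finite)) \<times> real"

fun iter_dderiv :: "'a::real_normed_vector list \<Rightarrow> ('a \<Rightarrow> 'b::real_normed_vector) \<Rightarrow> 'a \<Rightarrow> 'b" where
  "iter_dderiv [] f = f"
| "iter_dderiv (u # us) f = (\<lambda>x. frechet_derivative (iter_dderiv us f) (at x) u)"

definition smooth_on :: "'a::real_normed_vector set \<Rightarrow> ('a \<Rightarrow> 'b::real_normed_vector) \<Rightarrow> bool" where
  "smooth_on S f \<longleftrightarrow> (\<forall>us. iter_dderiv us f differentiable_on S)"

definition diffeomorphism :: "'a::real_normed_vector set \<Rightarrow> 'a set \<Rightarrow> ('a \<Rightarrow> 'a) \<Rightarrow> bool" where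
  "diffeomorphism U V \<Psi> \<longleftrightarrow> open U \<and> open V \<and> bij_betw \<Psi> U V \<and>
     smooth_on U \<Psi> \<and> smooth_on V (inv_into U \<Psi>)"

definition jvec :: "('n::finite) pt \<Rightarrow> 'n pt" where
  "jvec v = (fst v, 0)"

definition dt :: "('n::finite) pt \<Rightarrow> real" where "dt v = snd v"
definition ddt :: "('n::finite) pt" where "ddt = (0, 1)"

definition multilinear :: "nat \<Rightarrow> ('v::real_vector list \<Rightarrow> real) \<Rightarrow> bool" where
  "multilinear k T \<longleftrightarrow> (\<forall>xs i. length xs = k \<longrightarrow> i < k \<longrightarrow> linear (\<lambda>v. T (xs[i := v])))"

definition alternating :: "nat \<Rightarrow> ('v::real_vector list \<Rightarrow> real) \<Rightarrow> bool" where
  "alternating k T \<longleftrightarrow> multilinear k T \<and>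
     (\<forall>xs i i'. length xs = k \<longrightarrow> i < k \<longrightarrow> i' < k \<longrightarrow> i \<noteq> i' \<longrightarrow> xs ! i = xs ! i' \<longrightarrow> T xs = 0)"

definition cov_tensor_field :: "('n::finite) pt set \<Rightarrow> nat \<Rightarrow> ('n pt \<Rightarrow> 'n pt list \<Rightarrow> real) \<Rightarrow> bool" where
  "cov_tensor_field V k \<omega> \<longleftrightarrow> (\<forall>p\<in>V. multilinear k (\<omega> p)) \<and>
     (\<forall>vs. length vs = k \<longrightarrow> smooth_on V (\<lambda>p. \<omega> p vs))"

definition form_field :: "('n::finite) pt set \<Rightarrow> nat \<Rightarrow> ('n pt \<Rightarrow> 'n pt list \<Rightarrow> real) \<Rightarrow> bool" where
  "form_field V k \<omega> \<longleftrightarrow> cov_tensor_field V k \<omega> \<and> (\<forall>p\<in>V. alternating k (\<omega> p))"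

definition spatial_vector_field :: "('n::finite) pt set \<Rightarrow> ('n pt \<Rightarrow> 'n pt) \<Rightarrow> bool" where
  "spatial_vector_field V S \<longleftrightarrow> smooth_on V S \<and> (\<forall>p\<in>V. dt (S p) = 0)"

definition pullback_cov :: "(('n::finite) pt \<Rightarrow> 'n pt) \<Rightarrow> ('n pt \<Rightarrow> 'n pt list \<Rightarrow> real) \<Rightarrow> 'n pt \<Rightarrow> 'n pt list \<Rightarrow> real" where
  "pullback_cov \<Psi> \<omega> p vs = \<omega> (\<Psi> p) (map (frechet_derivative \<Psi> (at p)) vs)"

definition jstar_cov :: "(('n::finite) pt \<Rightarrow> 'n pt list \<Rightarrow> real) \<Rightarrow> 'n pt \<Rightarrow> 'n pt list \<Rightarrow> real" where
  "jstar_cov \<omega> p vs = \<omega> p (map jvec vs)"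

definition interior_product :: "(('n::finite) pt \<Rightarrow> 'n pt) \<Rightarrow> ('n pt \<Rightarrow> 'n pt list \<Rightarrow> real) \<Rightarrow> 'n pt \<Rightarrow> 'n pt list \<Rightarrow> real" where
  "interior_product S \<omega> p vs = \<omega> p (S p # vs)"

definition multilinear_mixed :: "nat \<Rightarrow> nat \<Rightarrow> ((('n::finite) pt \<Rightarrow> real) list \<Rightarrow> 'n pt list \<Rightarrow> real) \<Rightarrow> bool" where
  "multilinear_mixed r k T \<longleftrightarrow>
     (\<forall>as vs. length as = r \<longrightarrow> length vs = k \<longrightarrow> (\<forall>a\<in>set as. linear a) \<longrightarrow>
        (\<forall>i<k. linear (\<lambda>v. T as (vs[i := v]))) \<and>
        (\<forall>i<r. \<forall>b c. linear b \<longrightarrow> linear c \<longrightarrow> (\<forall>s::real.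
            T (as[i := (\<lambda>x. b x + s * c x)]) vs = T (as[i := b]) vs + s * T (as[i := c]) vs)))"

definition tensor_field :: "('n::finite) pt set \<Rightarrow> nat \<Rightarrow> nat \<Rightarrow> ('n pt \<Rightarrow> ('n pt \<Rightarrow> real) list \<Rightarrow> 'n pt list \<Rightarrow> real) \<Rightarrow> bool" where
  "tensor_field V r k B \<longleftrightarrow> (\<forall>p\<in>V. multilinear_mixed r k (B p)) \<and>
     (\<forall>as vs. length as = r \<longrightarrow> length vs = k \<longrightarrow> (\<forall>a\<in>set as. linear a) \<longrightarrow>
        smooth_on V (\<lambda>p. B p as vs))"

definition spatial :: "('n::finite) pt set \<Rightarrow> nat \<Rightarrow> nat \<Rightarrow> ('n pt \<Rightarrow> ('n pt \<Rightarrow> real) list \<Rightarrow> 'n pt list \<Rightarrow> real) \<Rightarrow> bool" where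
  "spatial V r k B \<longleftrightarrow> (\<forall>p\<in>V. \<forall>as vs. length as = r \<longrightarrow> length vs = k \<longrightarrow> (\<forall>a\<in>set as. linear a) \<longrightarrow>
        (dt \<in> set as \<or> ddt \<in> set vs) \<longrightarrow> B p as vs = 0)"

text \<open>pullback: vectors are pushed forward by D Psi, covectors are pulled back by
  D(Psi^{-1}) (i.e. Psi^* Y = (Psi^{-1})_* Y on vectors)\<close>
definition pullback :: "('n::finite) pt set \<Rightarrow> ('n pt \<Rightarrow> 'n pt) \<Rightarrow> ('n pt \<Rightarrow> ('n pt \<Rightarrow> real) list \<Rightarrow> 'n pt list \<Rightarrow> real)
     \<Rightarrow> 'n pt \<Rightarrow> ('n pt \<Rightarrow> real) list \<Rightarrow> 'n pt list \<Rightarrow> real" where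
  "pullback U \<Psi> B p as vs =
     B (\<Psi> p) (map (\<lambda>a. a \<circ> frechet_derivative (inv_into U \<Psi>) (at (\<Psi> p))) as)
              (map (frechet_derivative \<Psi> (at p)) vs)"

definition jstar :: "(('n::finite) pt \<Rightarrow> ('n pt \<Rightarrow> real) list \<Rightarrow> 'n pt list \<Rightarrow> real)
     \<Rightarrow> 'n pt \<Rightarrow> ('n pt \<Rightarrow> real) list \<Rightarrow> 'n pt list \<Rightarrow> real" where
  "jstar B p as vs = B p (map (\<lambda>a. a \<circ> jvec) as) (map jvec vs)"

end

theory Submission
  imports Defs
begin

text \<open>Since \<Psi> preserves t, its differential preserves the t-component of vectors and hence maps
  spatial vectors to spatial vectors. This gives (1) at once, and (2) because the n + 1 arguments
  S, D\<Psi>(j v_1), ..., D\<Psi>(j v_n) then lie in the n-dimensional space of spatial vectors, on which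
  an alternating (n+1)-form vanishes. For (3), \<Psi> and its inverse fix the slice through p, so both
  differentials at p are the identity on spatial vectors. Then j_* \<Psi>^* B differs from B only by
  multiples of dt added to the covector arguments and multiples of d/dt added to the vector
  arguments, which a spatial multilinear B does not see.\<close>

lemma alternating_eq_0_if_dependent:
  fixes T :: "'v::real_vector list \<Rightarrow> real"
  assumes alt: "alternating k T" and len: "length ws = k" and dep: "dependent (set ws)"
  shows "T ws = 0"
proof -
  obtain a where a: "a \<in> set ws" "a \<in> span (set ws - {a})"
    using dep unfolding dependent_def by blast
  then obtain i where i: "i < k" "ws ! i = a" using len by (auto simp: in_set_conv_nth)
  obtain c where c: "a = (\<Sum>v\<in>set ws - {a}. c v *\<^sub>R v)"
    using a(2) span_finite[of "set ws - {a}"] by auto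
  have lin: "linear (\<lambda>v. T (ws[i := v]))"
    using alt len i unfolding alternating_def multilinear_def by blast
  have "T ws = T (ws[i := a])" using i len by (metis list_update_id)
  also have "\<dots> = (\<Sum>v\<in>set ws - {a}. c v * T (ws[i := v]))"
    by (subst c) (simp add: linear_sum[OF lin] linear_scale[OF lin])
  also have "\<dots> = 0"
  proof (rule sum.neutral, rule ballI)
    fix v assume v: "v \<in> set ws - {a}"
    then obtain j where j: "j < k" "ws ! j = v" using len by (auto simp: in_set_conv_nth)
    with i v have "j \<noteq> i" by auto
    then have "T (ws[i := v]) = 0"
      using alt len i j unfolding alternating_def
      by (metis length_list_update nth_list_update_eq nth_list_update_neq)
    then show "c v * T (ws[i := v]) = 0" by simp
  qed
  finally show ?thesis .
qed

lemma alternating_eq_0_if_dim_less: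
  fixes T :: "'v::euclidean_space list \<Rightarrow> real"
  assumes alt: "alternating k T" and len: "length ws = k"
    and W: "set ws \<subseteq> W" and dim: "dim W < k"
  shows "T ws = 0"
proof (cases "distinct ws")
  case False
  then obtain i j where "i < k" "j < k" "i \<noteq> j" "ws ! i = ws ! j"
    using len by (auto simp: distinct_conv_nth)
  then show ?thesis using alt len unfolding alternating_def by blast
next
  case True
  then have "card (set ws) = k" using len by (simp add: distinct_card)
  then have "dependent (set ws)" using independent_card_le_dim[OF W] dim by fastforce
  then show ?thesis by (rule alternating_eq_0_if_dependent[OF alt len])
qed

lemma dim_spatial_le: "dim {w :: ('n::finite) pt. snd w = 0} \<le> CARD('n)"
proof -
  have "{w :: 'n pt. snd w = 0} = (\<lambda>x. (x, 0)) ` UNIV" by force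
  moreover have "linear (\<lambda>x::real^'n. (x, 0::real))" by (rule linearI) auto
  then have "dim ((\<lambda>x::real^'n. (x, 0::real)) ` UNIV) \<le> CARD('n)"
    using dim_image_le[of "\<lambda>x::real^'n. (x, 0::real)" UNIV] by (simp add: dim_UNIV)
  ultimately show ?thesis by simp
qed

lemma smooth_on_has_derivative:
  assumes "smooth_on U f" "open U" "p \<in> U"
  shows "(f has_derivative frechet_derivative f (at p)) (at p)"
proof -
  have "iter_dderiv [] f differentiable_on U" using assms(1) unfolding smooth_on_def by blast
  then have "f differentiable at p" using assms(2,3) differentiable_on_eq_differentiable_at by auto
  then show ?thesis using frechet_derivative_works by blast
qed

lemma has_derivative_preserves_linear_invariant:
  assumes g: "bounded_linear g" and f: "(f has_derivative D) (at p)"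
    and U: "open U" "p \<in> U" and inv: "\<And>q. q \<in> U \<Longrightarrow> g (f q) = g q"
  shows "g (D w) = g w"
proof -
  have "((\<lambda>q. g (f q)) has_derivative (\<lambda>v. g (D v))) (at p)"
    using bounded_linear.has_derivative[OF g f] .
  then have "(g has_derivative (\<lambda>v. g (D v))) (at p)"
    by (rule has_derivative_transform_within_open[OF _ U]) (use inv in auto)
  from has_derivative_unique[OF this bounded_linear_imp_has_derivative[OF g]]
  show ?thesis by metis
qed

lemma has_derivative_fixes_direction:
  fixes f :: "'a::real_normed_vector \<Rightarrow> 'a"
  assumes f: "(f has_derivative D) (at p)" and U: "open U" "p \<in> U"
    and fixes_line: "\<And>s. p + s *\<^sub>R w \<in> U \<Longrightarrow> f (p + s *\<^sub>R w) = p + s *\<^sub>R w"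
  shows "D w = w"
proof -
  let ?line = "\<lambda>s::real. p + s *\<^sub>R w"
  have line: "(?line has_derivative (\<lambda>s. s *\<^sub>R w)) (at 0)"
    by (auto intro!: derivative_eq_intros)
  have "(f \<circ> ?line has_derivative D \<circ> (\<lambda>s. s *\<^sub>R w)) (at 0)"
    using diff_chain_at[OF line] f by simp
  moreover have "open (?line -` U)"
    by (rule continuous_open_vimage[OF U(1)]) (auto intro!: continuous_intros)
  moreover have "0 \<in> ?line -` U" using U by simp
  ultimately have "(?line has_derivative D \<circ> (\<lambda>s. s *\<^sub>R w)) (at 0)"
    by (rule has_derivative_transform_within_open) (auto simp: fixes_line)
  from has_derivative_unique[OF this line] have "(D \<circ> (\<lambda>s. s *\<^sub>R w)) 1 = 1 *\<^sub>R w"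
    by metis
  then show ?thesis by simp
qed

lemma map_eq_by_list_updates:
  assumes step: "\<And>xs i. C xs \<Longrightarrow> i < length xs \<Longrightarrow>
      C (xs[i := f (xs ! i)]) \<and> F (xs[i := f (xs ! i)]) = F xs"
    and C: "C xs"
  shows "F (map f xs) = F xs"
proof -
  have "C (take m (map f xs) @ drop m xs) \<and> F (take m (map f xs) @ drop m xs) = F xs"
    if "m \<le> length xs" for m
    using that
  proof (induction m)
    case 0
    then show ?case using C by simp
  next
    case (Suc m)
    let ?ys = "take m (map f xs) @ drop m xs"
    have m: "m < length xs" using Suc.prems by simp
    have "?ys ! m = xs ! m" using m by (simp add: nth_append)
    then have "take (Suc m) (map f xs) @ drop (Suc m) xs = ?ys[m := f (?ys ! m)]"
      using m by (simp add: list_update_append take_Suc_conv_app_nth Cons_nth_drop_Suc[symmetric])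
    then show ?case using Suc.IH step[of ?ys m] m by auto
  qed
  from this[of "length xs"] show ?thesis by simp
qed

lemma jvec_eq_self: "snd w = 0 \<Longrightarrow> jvec w = w"
  by (simp add: jvec_def prod_eq_iff)

lemma snd_jvec [simp]: "snd (jvec w) = 0"
  by (simp add: jvec_def)

lemma jvec_add_ddt: "jvec x + snd x *\<^sub>R ddt = (x :: ('n::finite) pt)"
  by (simp add: jvec_def ddt_def prod_eq_iff)

lemma linear_jvec: "linear (jvec :: ('n::finite) pt \<Rightarrow> 'n pt)"
  by (rule linearI) (auto simp: jvec_def)

lemma linear_dt: "linear (dt :: ('n::finite) pt \<Rightarrow> real)"
  by (rule linearI) (auto simp: dt_def)

lemma multilinear_mixed_map_jvec:
  fixes T :: "(('n::finite) pt \<Rightarrow> real) list \<Rightarrow> 'n pt list \<Rightarrow> real"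
  assumes T: "multilinear_mixed r k T" and as: "length as = r" "\<forall>a\<in>set as. linear a"
    and vs: "length vs = k"
    and ddt_0: "\<And>ws. length ws = k \<Longrightarrow> ddt \<in> set ws \<Longrightarrow> T as ws = 0"
  shows "T as (map jvec vs) = T as vs"
proof (rule map_eq_by_list_updates[where C = "\<lambda>ws. length ws = k"])
  fix ws :: "'n pt list" and i assume ws: "length ws = k" "i < length ws"
  have lin: "linear (\<lambda>v. T as (ws[i := v]))" using T as ws unfolding multilinear_mixed_def by auto
  have "T as ws = T as (ws[i := jvec (ws ! i) + snd (ws ! i) *\<^sub>R ddt])"
    by (simp add: jvec_add_ddt)
  also have "\<dots> = T as (ws[i := jvec (ws ! i)]) + snd (ws ! i) * T as (ws[i := ddt])"
    by (simp add: linear_add[OF lin] linear_scale[OF lin])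
  also have "T as (ws[i := ddt]) = 0" using ddt_0 ws by (simp add: set_update_memI)
  finally show "length (ws[i := jvec (ws ! i)]) = k \<and> T as (ws[i := jvec (ws ! i)]) = T as ws"
    using ws by simp
qed (rule vs)

lemma multilinear_mixed_map_add_dt:
  fixes T :: "(('n::finite) pt \<Rightarrow> real) list \<Rightarrow> 'n pt list \<Rightarrow> real"
  assumes T: "multilinear_mixed r k T" and as: "length as = r" "\<forall>a\<in>set as. linear a"
    and vs: "length vs = k"
    and dt_0: "\<And>bs. length bs = r \<Longrightarrow> \<forall>b\<in>set bs. linear b \<Longrightarrow> dt \<in> set bs \<Longrightarrow> T bs vs = 0"
    and g: "\<And>a. linear a \<Longrightarrow> \<exists>s. g a = (\<lambda>x. a x + s * dt x)"
  shows "T (map g as) vs = T as vs"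
proof (rule map_eq_by_list_updates[where C = "\<lambda>bs. length bs = r \<and> (\<forall>b\<in>set bs. linear b)"])
  fix bs :: "('n pt \<Rightarrow> real) list" and i
  assume bs: "length bs = r \<and> (\<forall>b\<in>set bs. linear b)" "i < length bs"
  have lin: "linear (bs ! i)" using bs by auto
  obtain s where s: "g (bs ! i) = (\<lambda>x. (bs ! i) x + s * dt x)" using g[OF lin] by blast
  have "i < r" using bs by simp
  then have "T (bs[i := g (bs ! i)]) vs = T (bs[i := bs ! i]) vs + s * T (bs[i := dt]) vs"
    using T bs vs lin linear_dt unfolding s multilinear_mixed_def by blast
  also have "T (bs[i := dt]) vs = 0"
    using bs linear_dt set_update_subset_insert[of bs i dt]
    by (intro dt_0) (auto simp: set_update_memI)
  finally have "T (bs[i := g (bs ! i)]) vs = T bs vs" by simp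
  moreover have "linear (g (bs ! i))"
    unfolding s using linear_compose_add[OF lin linear_compose_scale_right[OF linear_dt, of s]] by simp
  ultimately show "(length (bs[i := g (bs ! i)]) = r \<and> (\<forall>b\<in>set (bs[i := g (bs ! i)]). linear b)) \<and>
      T (bs[i := g (bs ! i)]) vs = T bs vs"
    using bs set_update_subset_insert[of bs i "g (bs ! i)"] by auto
qed (use as in auto)

lemma covector_comp_jvec_comp_eq_add_dt:
  fixes L :: "('n::finite) pt \<Rightarrow> 'n pt"
  assumes L: "linear L" and L_spatial: "\<And>v. L (jvec v) = jvec v" and a: "linear a"
  shows "\<exists>s. a \<circ> jvec \<circ> L = (\<lambda>x. a x + s * dt x)"
proof -
  have "(a \<circ> jvec \<circ> L) x = a x + (a (jvec (L ddt)) - a ddt) * dt x" for x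
  proof -
    have "L x = L (jvec x) + snd x *\<^sub>R L ddt"
      using linear_add[OF L] linear_scale[OF L] jvec_add_ddt[of x] by metis
    then have "jvec (L x) = jvec x + snd x *\<^sub>R jvec (L ddt)"
      by (simp add: L_spatial linear_add[OF linear_jvec] linear_scale[OF linear_jvec] jvec_eq_self)
    then have "a (jvec (L x)) = a (jvec x) + snd x * a (jvec (L ddt))"
      by (simp add: linear_add[OF a] linear_scale[OF a])
    moreover have "a x = a (jvec x) + snd x * a ddt"
      using linear_add[OF a] linear_scale[OF a] jvec_add_ddt[of x] by (metis real_scaleR_def)
    ultimately show ?thesis by (simp add: dt_def algebra_simps)
  qed
  then show ?thesis by fast
qed

lemma has_derivative_fixes_spatial:
  fixes f :: "('n::finite) pt \<Rightarrow> 'n pt"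
  assumes f: "(f has_derivative D) (at p)" and U: "open U" "p \<in> U"
    and fixes_slice: "\<And>q. q \<in> U \<Longrightarrow> snd q = snd p \<Longrightarrow> f q = q"
  shows "D (jvec v) = jvec v"
  by (rule has_derivative_fixes_direction[OF f U]) (simp add: fixes_slice)

lemma diffeomorphism_snd_derivative:
  assumes diffeo: "diffeomorphism U V \<Psi>" and time: "\<forall>q\<in>U. snd (\<Psi> q) = snd q" and p: "p \<in> U"
  shows "snd (frechet_derivative \<Psi> (at p) w) = snd w"
proof -
  have "open U" "smooth_on U \<Psi>" using diffeo unfolding diffeomorphism_def by auto
  with p show ?thesis
    by (intro has_derivative_preserves_linear_invariant[OF bounded_linear_snd
          smooth_on_has_derivative, of U]) (use time in auto)
qed

lemma jstar_pullback_cov_jstar: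
  assumes "\<And>w. snd (frechet_derivative \<Psi> (at p) w) = snd w"
  shows "jstar_cov (pullback_cov \<Psi> \<omega>) p vs = jstar_cov (pullback_cov \<Psi> (jstar_cov \<omega>)) p vs"
  by (simp add: jstar_cov_def pullback_cov_def o_def jvec_eq_self assms)

lemma jstar_pullback_interior_product_eq_0:
  fixes \<omega> :: "('n::finite) pt \<Rightarrow> 'n pt list \<Rightarrow> real"
  assumes alt: "alternating (CARD('n) + 1) (\<omega> (\<Psi> p))" and S: "snd (S (\<Psi> p)) = 0"
    and D: "\<And>w. snd (frechet_derivative \<Psi> (at p) w) = snd w" and vs: "length vs = CARD('n)"
  shows "jstar_cov (pullback_cov \<Psi> (interior_product S \<omega>)) p vs = 0"
proof -
  have "\<omega> (\<Psi> p) (S (\<Psi> p) # map (\<lambda>v. frechet_derivative \<Psi> (at p) (jvec v)) vs) = 0"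
  proof (rule alternating_eq_0_if_dim_less[OF alt])
    show "set (S (\<Psi> p) # map (\<lambda>v. frechet_derivative \<Psi> (at p) (jvec v)) vs) \<subseteq> {w. snd w = 0}"
      by (simp add: S D image_subset_iff)
    show "dim {w :: 'n pt. snd w = 0} < CARD('n) + 1"
      using dim_spatial_le by (simp add: less_Suc_eq_le)
  qed (simp add: vs)
  then show ?thesis
    by (simp add: jstar_cov_def pullback_cov_def interior_product_def o_def)
qed

lemma jstar_pullback_eq_at_fixed_point:
  fixes B :: "('n::finite) pt \<Rightarrow> ('n pt \<Rightarrow> real) list \<Rightarrow> 'n pt list \<Rightarrow> real"
  assumes B: "tensor_field V r k B" "spatial V r k B" "p \<in> V"
    and fixed: "\<Psi> p = p"
    and D: "\<And>v. frechet_derivative \<Psi> (at p) (jvec v) = jvec v"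
    and Dinv: "linear (frechet_derivative (inv_into U \<Psi>) (at p))"
      "\<And>v. frechet_derivative (inv_into U \<Psi>) (at p) (jvec v) = jvec v"
    and as: "length as = r" "\<forall>a\<in>set as. linear a" and vs: "length vs = k"
  shows "jstar (pullback U \<Psi> B) p as vs = B p as vs"
proof -
  define g where "g a = a \<circ> jvec \<circ> frechet_derivative (inv_into U \<Psi>) (at p)"
    for a :: "'n pt \<Rightarrow> real"
  have g_as: "length (map g as) = r" "\<forall>b\<in>set (map g as). linear b"
    using as linear_jvec Dinv(1) by (auto simp: g_def intro!: linear_compose)
  have multilinear: "multilinear_mixed r k (B p)"
    using B unfolding tensor_field_def by blast
  have vanishes: "B p bs ws = 0"
    if "length bs = r" "length ws = k" "\<forall>b\<in>set bs. linear b" "dt \<in> set bs \<or> ddt \<in> set ws" for bs ws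
    using B that unfolding spatial_def by blast
  have "jstar (pullback U \<Psi> B) p as vs = B p (map g as) (map jvec vs)"
    by (simp add: jstar_def pullback_def fixed D g_def[abs_def] o_def)
  also have "\<dots> = B p (map g as) vs"
  proof (rule multilinear_mixed_map_jvec[OF multilinear g_as vs])
    show "B p (map g as) ws = 0" if "length ws = k" "ddt \<in> set ws" for ws
      using vanishes[OF g_as(1) that(1) g_as(2)] that(2) by blast
  qed
  also have "\<dots> = B p as vs"
  proof (rule multilinear_mixed_map_add_dt[OF multilinear as vs])
    show "B p bs vs = 0" if "length bs = r" "\<forall>b\<in>set bs. linear b" "dt \<in> set bs" for bs
      using vanishes[OF that(1) vs that(2)] that(3) by blast
    show "\<exists>s. g a = (\<lambda>x. a x + s * dt x)" if "linear a" for a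
      unfolding g_def by (rule covector_comp_jvec_comp_eq_add_dt[OF Dinv that])
  qed
  finally show ?thesis .
qed

lemma jstar_pullback_eq_on_fixed_slice:
  fixes B :: "('n::finite) pt \<Rightarrow> ('n pt \<Rightarrow> real) list \<Rightarrow> 'n pt list \<Rightarrow> real"
  assumes diffeo: "diffeomorphism U V \<Psi>" and fixes_slice: "\<forall>q\<in>U. snd q = snd p \<longrightarrow> \<Psi> q = q"
    and B: "tensor_field V r k B" "spatial V r k B" and p: "p \<in> U"
    and as: "length as = r" "\<forall>a\<in>set as. linear a" and vs: "length vs = k"
  shows "jstar (pullback U \<Psi> B) p as vs = B p as vs"
proof -
  have U: "open U" and V: "open V" and bij: "bij_betw \<Psi> U V"
    and smooth: "smooth_on U \<Psi>" "smooth_on V (inv_into U \<Psi>)"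
    using diffeo unfolding diffeomorphism_def by auto
  have fixed: "\<Psi> p = p" using fixes_slice p by blast
  have pV: "p \<in> V" using bij_betw_apply[OF bij p] fixed by simp
  have inv_fixes_slice: "inv_into U \<Psi> q = q" if "q \<in> U" "snd q = snd p" for q
    using fixes_slice that inv_into_f_f[OF bij_betw_imp_inj_on[OF bij], of q] by simp
  have D: "(\<Psi> has_derivative frechet_derivative \<Psi> (at p)) (at p)"
    using smooth_on_has_derivative[OF smooth(1) U p] .
  have Dinv: "(inv_into U \<Psi> has_derivative frechet_derivative (inv_into U \<Psi>) (at p)) (at p)"
    using smooth_on_has_derivative[OF smooth(2) V pV] .
  show ?thesis
  proof (rule jstar_pullback_eq_at_fixed_point[where \<Psi> = \<Psi> and p = p, OF B pV fixed])
    show "frechet_derivative \<Psi> (at p) (jvec v) = jvec v" for v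
      using has_derivative_fixes_spatial[OF D U p] fixes_slice by blast
    show "linear (frechet_derivative (inv_into U \<Psi>) (at p))"
      using has_derivative_linear[OF Dinv] .
    show "frechet_derivative (inv_into U \<Psi>) (at p) (jvec v) = jvec v" for v
      using has_derivative_fixes_spatial[OF Dinv U p] inv_fixes_slice by blast
  qed (use as vs in auto)
qed

theorem lemma4p1:
  fixes \<Sigma> :: "(real ^ 'n) set" and I :: "real set"
    and U V :: "'n pt set" and \<Psi> :: "'n pt \<Rightarrow> 'n pt"
  assumes \<Sigma>: "open \<Sigma>"
    and I: "open I" "is_interval I"
    and UM: "U \<subseteq> \<Sigma> \<times> I" and VM: "V \<subseteq> \<Sigma> \<times> I"
    and diffeo: "diffeomorphism U V \<Psi>"
    and time: "\<forall>p\<in>U. snd (\<Psi> p) = snd p"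
  shows
    "(\<forall>k \<omega>. cov_tensor_field V k \<omega> \<longrightarrow>
        (\<forall>p\<in>U. \<forall>vs. length vs = k \<longrightarrow>
           jstar_cov (pullback_cov \<Psi> \<omega>) p vs = jstar_cov (pullback_cov \<Psi> (jstar_cov \<omega>)) p vs))
   \<and> (\<forall>\<omega> S. form_field V (CARD('n) + 1) \<omega> \<longrightarrow> spatial_vector_field V S \<longrightarrow>
        (\<forall>p\<in>U. \<forall>vs. length vs = CARD('n) \<longrightarrow>
           jstar_cov (pullback_cov \<Psi> (interior_product S \<omega>)) p vs = 0))
   \<and> (\<forall>t0 r k B. (\<forall>p\<in>U. snd p = t0 \<longrightarrow> \<Psi> p = p) \<longrightarrow>
        tensor_field V r k B \<longrightarrow> spatial V r k B \<longrightarrow>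
        (\<forall>p\<in>U \<inter> (\<Sigma> \<times> {t0}). \<forall>as vs. length as = r \<longrightarrow> length vs = k \<longrightarrow> (\<forall>a\<in>set as. linear a) \<longrightarrow>
           jstar (pullback U \<Psi> B) p as vs = B p as vs))"
proof -
  have D_snd: "snd (frechet_derivative \<Psi> (at p) w) = snd w" if "p \<in> U" for p w
    using diffeomorphism_snd_derivative[OF diffeo time that] .
  have \<Psi>_V: "\<Psi> p \<in> V" if "p \<in> U" for p
    using diffeo that unfolding diffeomorphism_def by (auto intro: bij_betw_apply)
  show ?thesis
  proof (intro conjI allI impI ballI)
    show "jstar_cov (pullback_cov \<Psi> \<omega>) p vs = jstar_cov (pullback_cov \<Psi> (jstar_cov \<omega>)) p vs"
      if "p \<in> U" for \<omega> :: "'n pt \<Rightarrow> 'n pt list \<Rightarrow> real" and p vs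
      by (rule jstar_pullback_cov_jstar[OF D_snd[OF that]])
    show "jstar_cov (pullback_cov \<Psi> (interior_product S \<omega>)) p vs = 0"
      if "form_field V (CARD('n) + 1) \<omega>" "spatial_vector_field V S" "p \<in> U" "length vs = CARD('n)"
      for \<omega> S p vs
      using that \<Psi>_V[OF that(3)] D_snd[OF that(3)]
      by (intro jstar_pullback_interior_product_eq_0)
        (auto simp: form_field_def spatial_vector_field_def dt_def)
    show "jstar (pullback U \<Psi> B) p as vs = B p as vs"
      if "\<forall>p\<in>U. snd p = t0 \<longrightarrow> \<Psi> p = p" "tensor_field V r k B" "spatial V r k B"
        "p \<in> U \<inter> (\<Sigma> \<times> {t0})" "length as = r" "length vs = k" "\<forall>a\<in>set as. linear a"
      for t0 r k B p as vs
      using that by (intro jstar_pullback_eq_on_fixed_slice[OF diffeo]) auto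
  qed
qed

end
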